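(* Let $a$ be a regular scale factor with $\dot a(0^+)<\infty$, extended evenly to negative arguments, and fix $\tau>0$. Then the function $t_0\mapsto f(\tau,t_0)$ is continuously differentiable on $\{t_0: -\tau<t_0<\tau,\ t_0\neq0\}$, and \[ \partial_{t_0}f(\tau,t_0)=-\frac{a(t_0)\,\dot a(|t_0|)}{\sqrt{a^2(\tau)-a^2(t_0)}}\int_{|t_0|}^{\tau}\frac{\ddot a(t)}{\dot a(t)^2}\frac{dt}{\sqrt{a^2(\tau)-a^2(t)}}. \]
   Context: A function $a:[0,\infty)\to[0,\infty)$ is a regular scale factor if: (a) $a(0)=0$; (b) $a$ is increasing and continuous on $[0,\infty)$, twice continuously differentiable on $(0,\infty)$, with an inverse function on $[0,\infty)$; (c) $\frac{a(t)\ddot a(t)}{\dot a(t)^2}\le1$ for all $t>0$ (presupposing $\dot a(t)\ne0$). $\dot a(0^+)=\lim_{t\to0^+}\dot a(t)$. Extend $a$ by $a(-t)=a(t)$. For $0\le t_0<\tau$, \[ f(\tau,t_0)=\int_{t_0}^{\tau}\frac{\ddot a(t)}{\dot a(t)^2}\left(\frac{\sqrt{a^2(\tau)-a^2(t_0)}}{\sqrt{a^2(\tau)-a^2(t)}}-1\right)dt, \] and for $-\tau<t_0<0$, $f(\tau,t_0)=2f(\tau,0)-f(\tau,-t_0)$. *)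

theory Defs
  imports "HOL-Analysis.Analysis"
begin

text \<open>Regular scale factor (values of a on negative reals are irrelevant here;
  the even extension is imposed separately in the theorem).\<close>
definition regular_scale_factor :: "(real \<Rightarrow> real) \<Rightarrow> bool" where
  "regular_scale_factor a \<longleftrightarrow>
     a 0 = 0 \<and>
     (\<forall>t\<ge>0. a t \<ge> 0) \<and>
     strict_mono_on {0..} a \<and>
     inj_on a {0..} \<and>
     continuous_on {0..} a \<and>
     (\<forall>t>0. a differentiable (at t)) \<and>
     (\<forall>t>0. deriv a differentiable (at t)) \<and>
     continuous_on {0<..} (deriv (deriv a)) \<and>
     (\<forall>t>0. deriv a t \<noteq> 0) \<and>
     (\<forall>t>0. a t * deriv (deriv a) t / (deriv a t)^2 \<le> 1)"

text \<open>The function f(tau, t0) (Henstock-Kurzweil integral, which covers the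
  improper integrals involved).\<close>
definition sf_f0 :: "(real \<Rightarrow> real) \<Rightarrow> real \<Rightarrow> real \<Rightarrow> real" where
  "sf_f0 a \<tau> t0 = integral {t0..\<tau>}
     (\<lambda>t. deriv (deriv a) t / (deriv a t)^2 *
          (sqrt ((a \<tau>)^2 - (a t0)^2) / sqrt ((a \<tau>)^2 - (a t)^2) - 1))"

definition sf_f :: "(real \<Rightarrow> real) \<Rightarrow> real \<Rightarrow> real \<Rightarrow> real" where
  "sf_f a \<tau> t0 = (if 0 \<le> t0 then sf_f0 a \<tau> t0 else 2 * sf_f0 a \<tau> 0 - sf_f0 a \<tau> (- t0))"

end

theory Submission
  imports Defs
begin

text \<open>Write \<open>S t = sqrt (a \<tau>\<^sup>2 - a t\<^sup>2)\<close> and \<open>g = a''/a'\<^sup>2\<close>. For \<open>0 < t\<^sub>0 < \<tau>\<close> the integrand of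
  \<open>f(\<tau>, t\<^sub>0)\<close> is \<open>S t\<^sub>0 \<cdot> g/S - g\<close>, so \<open>f(\<tau>, t\<^sub>0) = S t\<^sub>0 \<cdot> \<integral>\<^sub>t\<^sub>0\<^sup>\<tau> g/S - \<integral>\<^sub>t\<^sub>0\<^sup>\<tau> g\<close>.
  Differentiating, the two boundary terms \<open>-S t\<^sub>0 \<cdot> g t\<^sub>0/S t\<^sub>0\<close> and \<open>+g t\<^sub>0\<close> cancel and only
  \<open>S'(t\<^sub>0) \<cdot> \<integral>\<^sub>t\<^sub>0\<^sup>\<tau> g/S\<close> survives, with \<open>S' = -a a'/S\<close>. The singularity of \<open>1/S\<close> sits at
  \<open>\<tau>\<close>, away from \<open>t\<^sub>0\<close>, so only the integrals over a neighbourhood of \<open>t\<^sub>0\<close> vary.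
  For \<open>t\<^sub>0 < 0\<close> the defining reflection \<open>f(\<tau>, t\<^sub>0) = 2 f(\<tau>, 0) - f(\<tau>, -t\<^sub>0)\<close> gives the
  derivative at \<open>|t\<^sub>0|\<close>, and evenness of \<open>a\<close> turns it into the stated formula.\<close>

lemma integral_lower_bound_has_real_derivative:
  fixes h :: "real \<Rightarrow> real"
  assumes h: "continuous_on {l..c} h" "h integrable_on {c..b}"
    and t: "l < t" "t < c" and "c \<le> b"
  shows "((\<lambda>s. integral {s..b} h) has_real_derivative - h t) (at t)"
proof -
  have "t \<in> interior {l..c}" using t by simp
  then have "((\<lambda>s. integral {s..c} h) has_real_derivative - h t) (at t)"
    using integral_has_real_derivative'[OF h(1), of t] t
    unfolding at_within_interior[OF \<open>t \<in> interior {l..c}\<close>] by simp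
  then have "((\<lambda>s. integral {s..c} h + integral {c..b} h) has_real_derivative - h t) (at t)"
    using DERIV_add[OF _ DERIV_const[of "integral {c..b} h"]] by simp
  then show ?thesis
  proof (rule has_field_derivative_transform_within_open[where S = "{l<..<c}"])
    fix s assume s: "s \<in> {l<..<c}"
    then have sc: "s \<le> c" by simp
    have "h integrable_on {s..c}"
      using s by (intro integrable_continuous_interval continuous_on_subset[OF h(1)]) auto
    then have "h integrable_on {s..b}"
      using Henstock_Kurzweil_Integration.integrable_combine[OF sc \<open>c \<le> b\<close>] h(2) by blast
    then show "integral {s..c} h + integral {c..b} h = integral {s..b} h"
      using Henstock_Kurzweil_Integration.integral_combine[OF sc \<open>c \<le> b\<close>] by blast
  qed (use t in auto)
qed

lemma integral_lower_bound_eq_0_if_not_integrable: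
  fixes h :: "real \<Rightarrow> real"
  assumes "\<not> h integrable_on {c..b}" "s \<le> c"
  shows "integral {s..b} h = 0"
  using assms integrable_subinterval_real[of h s b c b] by (auto intro: not_integrable_integral)

lemma isCont_integral_lower_bound:
  fixes h :: "real \<Rightarrow> real"
  assumes h: "continuous_on {l..c} h" and t: "l < t" "t < c" and "c \<le> b"
  shows "isCont (\<lambda>s. integral {s..b} h) t"
proof (cases "h integrable_on {c..b}")
  case True
  from integral_lower_bound_has_real_derivative[OF h True t \<open>c \<le> b\<close>] show ?thesis
    by (rule DERIV_isCont)
next
  case False
  have "((\<lambda>s. integral {s..b} h) has_real_derivative 0) (at t)"
    by (rule has_field_derivative_transform_within_open[OF DERIV_const, where S = "{..<c}"])
      (use t integral_lower_bound_eq_0_if_not_integrable[OF False] in auto)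
  then show ?thesis by (rule DERIV_isCont)
qed

text \<open>Here \<open>1/S\<close> may be singular at \<open>b\<close>. If \<open>g/S\<close> is not integrable up to \<open>b\<close>, then
  neither is the integrand near \<open>t\<close>, and both sides are the junk value \<open>0\<close>.\<close>
lemma has_real_derivative_integral_ratio:
  fixes g S :: "real \<Rightarrow> real"
  assumes g: "continuous_on {l..b} g"
    and S: "continuous_on {l..c} S" "\<And>x. x \<in> {l..c} \<Longrightarrow> S x \<noteq> 0"
    and dS: "(S has_real_derivative S') (at t)"
    and t: "l < t" "t < c" and "c \<le> b"
  shows "((\<lambda>s. integral {s..b} (\<lambda>x. g x * (S s / S x - 1))) has_real_derivative
           S' * integral {t..b} (\<lambda>x. g x / S x)) (at t)"
proof -
  define h where "h = (\<lambda>x. g x / S x)"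
  have h_cont: "continuous_on {l..c} h"
    unfolding h_def using g S t \<open>c \<le> b\<close>
    by (intro continuous_intros continuous_on_subset[OF g]) auto
  have integrand: "g x * (S s / S x - 1) = S s * h x - g x" for s x
    by (simp add: h_def divide_inverse algebra_simps)
  have g_int: "g integrable_on {s..b}" if "l \<le> s" for s
    using that by (intro integrable_continuous_interval continuous_on_subset[OF g]) auto
  have "((\<lambda>s. integral {s..b} (\<lambda>x. g x * (S s / S x - 1))) has_real_derivative
           S' * integral {t..b} h) (at t)"
  proof (cases "h integrable_on {c..b}")
    case True
    have h_int: "h integrable_on {s..b}" if "s \<in> {l<..<c}" for s
    proof -
      have "h integrable_on {s..c}"
        using that by (intro integrable_continuous_interval continuous_on_subset[OF h_cont]) auto
      with True show ?thesis
        using Henstock_Kurzweil_Integration.integrable_combine[of s c b h] that \<open>c \<le> b\<close> by auto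
    qed
    have "((\<lambda>s. S s * integral {s..b} h - integral {s..b} g) has_real_derivative
            S' * integral {t..b} h + (- h t) * S t - (- g t)) (at t)"
      using integral_lower_bound_has_real_derivative[OF h_cont True t \<open>c \<le> b\<close>]
        integral_lower_bound_has_real_derivative[OF continuous_on_subset[OF g] g_int[of c] t \<open>c \<le> b\<close>]
        t \<open>c \<le> b\<close>
      by (intro DERIV_diff DERIV_mult dS) auto
    moreover have "(- h t) * S t - (- g t) = 0"
      using S(2)[of t] t by (simp add: h_def)
    ultimately have "((\<lambda>s. S s * integral {s..b} h - integral {s..b} g) has_real_derivative
            S' * integral {t..b} h) (at t)"
      by simp
    then show ?thesis
    proof (rule has_field_derivative_transform_within_open[where S = "{l<..<c}"])
      fix s assume s: "s \<in> {l<..<c}"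
      have "(\<lambda>x. S s * h x) integrable_on {s..b}"
        using h_int[OF s] by (rule integrable_on_mult_right)
      with g_int[of s] s show "S s * integral {s..b} h - integral {s..b} g
          = integral {s..b} (\<lambda>x. g x * (S s / S x - 1))"
        by (simp add: integrand Henstock_Kurzweil_Integration.integral_diff)
    qed (use t in auto)
  next
    case False
    have "integral {s..b} (\<lambda>x. g x * (S s / S x - 1)) = 0" if "s \<in> {l<..<c}" for s
    proof (rule not_integrable_integral, rule notI)
      assume "(\<lambda>x. g x * (S s / S x - 1)) integrable_on {s..b}"
      then have "(\<lambda>x. (g x * (S s / S x - 1) + g x) / S s) integrable_on {s..b}"
        using g_int[of s] that by (intro integrable_on_divide integrable_add) auto
      moreover have "(\<lambda>x. (g x * (S s / S x - 1) + g x) / S s) = h"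
        using S(2)[of s] that by (auto simp: h_def field_simps)
      ultimately show False
        using False integrable_subinterval_real[of h s b c b] that by auto
    qed
    then have "((\<lambda>s. integral {s..b} (\<lambda>x. g x * (S s / S x - 1))) has_real_derivative 0) (at t)"
      by (intro has_field_derivative_transform_within_open[OF DERIV_const, where S = "{l<..<c}"])
        (use t in auto)
    moreover have "integral {t..b} h = 0"
      using integral_lower_bound_eq_0_if_not_integrable[OF False] t by simp
    ultimately show ?thesis by simp
  qed
  then show ?thesis by (simp only: h_def)
qed

lemma regular_scale_factorD:
  assumes "regular_scale_factor a"
  shows regular_scale_factor_has_derivative:
      "\<And>t. 0 < t \<Longrightarrow> (a has_real_derivative deriv a t) (at t)"
    and regular_scale_factor_isCont_deriv: "\<And>t. 0 < t \<Longrightarrow> isCont (deriv a) t"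
    and regular_scale_factor_continuous_deriv2: "continuous_on {0<..} (deriv (deriv a))"
    and regular_scale_factor_deriv_nonzero: "\<And>t. 0 < t \<Longrightarrow> deriv a t \<noteq> 0"
    and regular_scale_factor_less: "\<And>s t. 0 \<le> s \<Longrightarrow> s < t \<Longrightarrow> a s < a t"
    and regular_scale_factor_nonneg: "\<And>t. 0 \<le> t \<Longrightarrow> 0 \<le> a t"
  using assms
  unfolding regular_scale_factor_def DERIV_deriv_iff_real_differentiable strict_mono_on_def
  by (auto simp: differentiable_imp_continuous_within)

lemma regular_scale_factor_square_gap_pos:
  assumes "regular_scale_factor a" "0 \<le> t" "t < \<tau>"
  shows "0 < (a \<tau>)^2 - (a t)^2"
proof -
  have "0 \<le> a t" "a t < a \<tau>"
    using regular_scale_factor_nonneg regular_scale_factor_less assms by auto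
  then show ?thesis by (simp add: power_strict_mono)
qed

lemma continuous_on_regular_scale_factor:
  assumes "regular_scale_factor a"
  shows "continuous_on {0<..} a"
  by (intro continuous_at_imp_continuous_on ballI
      DERIV_isCont[OF regular_scale_factor_has_derivative[OF assms]]) simp

lemma continuous_on_regular_scale_factor_curvature:
  assumes "regular_scale_factor a"
  shows "continuous_on {0<..} (\<lambda>t. deriv (deriv a) t / (deriv a t)^2)"
proof -
  have "continuous_on {0<..} (deriv a)"
    using regular_scale_factor_isCont_deriv[OF assms] by (intro continuous_at_imp_continuous_on) auto
  then show ?thesis
    using regular_scale_factor_continuous_deriv2[OF assms] regular_scale_factor_deriv_nonzero[OF assms]
    by (intro continuous_intros) auto
qed

lemma has_real_derivative_sqrt_square_gap:
  assumes R: "regular_scale_factor a" and t: "0 < t" "t < \<tau>"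
  shows "((\<lambda>s. sqrt ((a \<tau>)^2 - (a s)^2)) has_real_derivative
           - (a t * deriv a t) / sqrt ((a \<tau>)^2 - (a t)^2)) (at t)"
proof -
  have "0 < (a \<tau>)^2 - (a t)^2"
    using regular_scale_factor_square_gap_pos[OF R] t by simp
  then show ?thesis
    using regular_scale_factor_has_derivative[OF R t(1)]
    by (auto intro!: derivative_eq_intros simp: field_simps)
qed

definition sf_f_deriv :: "(real \<Rightarrow> real) \<Rightarrow> real \<Rightarrow> real \<Rightarrow> real" where
  "sf_f_deriv a \<tau> s = - (a s * deriv a s) / sqrt ((a \<tau>)^2 - (a s)^2)
     * integral {s..\<tau>} (\<lambda>t. deriv (deriv a) t / (deriv a t)^2 / sqrt ((a \<tau>)^2 - (a t)^2))"

lemma sf_f0_has_real_derivative: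
  assumes R: "regular_scale_factor a" and s: "0 < s" "s < \<tau>"
  shows "(sf_f0 a \<tau> has_real_derivative sf_f_deriv a \<tau> s) (at s)"
proof -
  define g where "g t = deriv (deriv a) t / (deriv a t)^2" for t
  define S where "S t = sqrt ((a \<tau>)^2 - (a t)^2)" for t
  define l c where "l = s / 2" and "c = (s + \<tau>) / 2"
  have lc: "0 < l" "l < s" "s < c" "c < \<tau>" using s by (auto simp: l_def c_def)
  have "continuous_on {l..\<tau>} g"
    unfolding g_def using lc
    by (intro continuous_on_subset[OF continuous_on_regular_scale_factor_curvature[OF R]]) auto
  moreover have "continuous_on {l..c} S"
    unfolding S_def using lc
    by (intro continuous_intros continuous_on_subset[OF continuous_on_regular_scale_factor[OF R]]) auto
  moreover have "S x \<noteq> 0" if "x \<in> {l..c}" for x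
    using regular_scale_factor_square_gap_pos[OF R, of x \<tau>] that lc by (simp add: S_def)
  moreover have "(S has_real_derivative - (a s * deriv a s) / S s) (at s)"
    unfolding S_def using has_real_derivative_sqrt_square_gap[OF R s] .
  ultimately have "((\<lambda>t. integral {t..\<tau>} (\<lambda>x. g x * (S t / S x - 1))) has_real_derivative
      - (a s * deriv a s) / S s * integral {s..\<tau>} (\<lambda>x. g x / S x)) (at s)"
    using lc by (intro has_real_derivative_integral_ratio) auto
  then show ?thesis
    unfolding sf_f0_def sf_f_deriv_def g_def S_def .
qed

lemma isCont_sf_f_deriv:
  assumes R: "regular_scale_factor a" and s: "0 < s" "s < \<tau>"
  shows "isCont (sf_f_deriv a \<tau>) s"
proof -
  define l c where "l = s / 2" and "c = (s + \<tau>) / 2"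
  have lc: "0 < l" "l < s" "s < c" "c < \<tau>" using s by (auto simp: l_def c_def)
  have "continuous_on {l..c} (\<lambda>t. deriv (deriv a) t / (deriv a t)^2)"
    using lc by (intro continuous_on_subset[OF continuous_on_regular_scale_factor_curvature[OF R]]) auto
  moreover have "continuous_on {l..c} (\<lambda>t. sqrt ((a \<tau>)^2 - (a t)^2))"
    using lc by (intro continuous_intros continuous_on_subset[OF continuous_on_regular_scale_factor[OF R]]) auto
  moreover have "\<forall>t\<in>{l..c}. sqrt ((a \<tau>)^2 - (a t)^2) \<noteq> 0"
  proof
    fix t assume "t \<in> {l..c}"
    then have "0 < (a \<tau>)^2 - (a t)^2"
      using lc by (intro regular_scale_factor_square_gap_pos[OF R]) auto
    then show "sqrt ((a \<tau>)^2 - (a t)^2) \<noteq> 0" by simp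
  qed
  ultimately have "continuous_on {l..c}
      (\<lambda>t. deriv (deriv a) t / (deriv a t)^2 / sqrt ((a \<tau>)^2 - (a t)^2))"
    by (rule continuous_on_divide)
  then have "isCont (\<lambda>t. integral {t..\<tau>}
      (\<lambda>t. deriv (deriv a) t / (deriv a t)^2 / sqrt ((a \<tau>)^2 - (a t)^2))) s"
    using lc by (intro isCont_integral_lower_bound) auto
  moreover have "0 < (a \<tau>)^2 - (a s)^2"
    using regular_scale_factor_square_gap_pos[OF R] s by simp
  ultimately show ?thesis
    unfolding sf_f_deriv_def using s
    by (intro continuous_intros DERIV_isCont[OF regular_scale_factor_has_derivative[OF R]]
        regular_scale_factor_isCont_deriv[OF R]) auto
qed

text \<open>For \<open>t < 0\<close>, \<open>sf_f a \<tau> t = 2 sf_f0 a \<tau> 0 - sf_f0 a \<tau> (-t)\<close>, so the two sign changes cancel.\<close>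
lemma sf_f_has_real_derivative:
  assumes R: "regular_scale_factor a" and t: "t \<noteq> 0" "\<bar>t\<bar> < \<tau>"
  shows "(sf_f a \<tau> has_real_derivative sf_f_deriv a \<tau> \<bar>t\<bar>) (at t)"
proof (cases "0 < t")
  case True
  then have "(sf_f0 a \<tau> has_real_derivative sf_f_deriv a \<tau> \<bar>t\<bar>) (at t)"
    using sf_f0_has_real_derivative[OF R, of t \<tau>] t by simp
  then show ?thesis
  proof (rule has_field_derivative_transform_within_open[where S = "{0<..}"])
    show "sf_f0 a \<tau> s = sf_f a \<tau> s" if "s \<in> {0<..}" for s
      using that by (simp add: sf_f_def)
  qed (use True in auto)
next
  case False
  then have "0 < - t" "- t < \<tau>" using t by auto
  from DERIV_chain2[OF sf_f0_has_real_derivative[OF R this] DERIV_minus[OF DERIV_ident]]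
  have "((\<lambda>s. sf_f0 a \<tau> (- s)) has_real_derivative - sf_f_deriv a \<tau> \<bar>t\<bar>) (at t)"
    using False by simp
  then have "((\<lambda>s. 2 * sf_f0 a \<tau> 0 - sf_f0 a \<tau> (- s)) has_real_derivative
      sf_f_deriv a \<tau> \<bar>t\<bar>) (at t)"
    using DERIV_diff[OF DERIV_const[of "2 * sf_f0 a \<tau> 0"]] by fastforce
  then show ?thesis
  proof (rule has_field_derivative_transform_within_open[where S = "{..<0}"])
    show "2 * sf_f0 a \<tau> 0 - sf_f0 a \<tau> (- s) = sf_f a \<tau> s" if "s \<in> {..<0}" for s
      using that by (simp add: sf_f_def)
  qed (use False t in auto)
qed

theorem lemma5p5:
  fixes a :: "real \<Rightarrow> real" and \<tau> L :: real
  assumes "regular_scale_factor a"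
    and "(deriv a \<longlongrightarrow> L) (at_right 0)"
    and "\<forall>t. a (- t) = a t"
    and "\<tau> > 0"
  shows "(\<forall>t0\<in>{-\<tau><..<\<tau>} - {0}.
            ((\<lambda>s. sf_f a \<tau> s) has_real_derivative
               (- (a t0 * deriv a \<bar>t0\<bar>) / sqrt ((a \<tau>)^2 - (a t0)^2)
                * integral {\<bar>t0\<bar>..\<tau>}
                    (\<lambda>t. deriv (deriv a) t / (deriv a t)^2 / sqrt ((a \<tau>)^2 - (a t)^2))))
             (at t0))
       \<and> continuous_on ({-\<tau><..<\<tau>} - {0})
           (\<lambda>t0. - (a t0 * deriv a \<bar>t0\<bar>) / sqrt ((a \<tau>)^2 - (a t0)^2)
                * integral {\<bar>t0\<bar>..\<tau>}
                    (\<lambda>t. deriv (deriv a) t / (deriv a t)^2 / sqrt ((a \<tau>)^2 - (a t)^2)))"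
proof -
  note R = assms(1)
  have even: "a \<bar>t0\<bar> = a t0" for t0
    using assms(3) by (cases "0 \<le> t0") (simp_all only: abs_of_nonneg abs_of_neg not_le)
  have formula: "- (a t0 * deriv a \<bar>t0\<bar>) / sqrt ((a \<tau>)^2 - (a t0)^2)
      * integral {\<bar>t0\<bar>..\<tau>} (\<lambda>t. deriv (deriv a) t / (deriv a t)^2 / sqrt ((a \<tau>)^2 - (a t)^2))
      = sf_f_deriv a \<tau> \<bar>t0\<bar>" for t0
    unfolding sf_f_deriv_def even ..
  have domain: "t0 \<noteq> 0" "\<bar>t0\<bar> < \<tau>" if "t0 \<in> {-\<tau><..<\<tau>} - {0}" for t0
    using that by auto
  have "isCont (\<lambda>t0. sf_f_deriv a \<tau> \<bar>t0\<bar>) t0" if "t0 \<in> {-\<tau><..<\<tau>} - {0}" for t0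
  proof (rule isCont_o2[where f = abs])
    show "isCont abs t0" by (intro continuous_intros)
    show "isCont (sf_f_deriv a \<tau>) \<bar>t0\<bar>"
      using domain[OF that] by (intro isCont_sf_f_deriv[OF R]) auto
  qed
  then show ?thesis
    unfolding formula
    using sf_f_has_real_derivative[OF R domain] by (blast intro: continuous_at_imp_continuous_on)
qed

end
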